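(* For $a_1,a_2\in[n]$, in $\mathbb{Q}[S_n]$, \[B_{a_1}B_{a_2}=\sum_{j=\max(a_1,a_2)}^{\min(a_1+a_2,n)}\frac{a_2!}{(j-a_1)!\,(a_1+a_2-j)!}\cdot\frac{a_1!}{(j-a_2)!}\,B_j.\]
   Context: Elements of $S_n$ are written in deck notation: a word $c_1\cdots c_n$ (a rearrangement of $1,\ldots,n$) is the deck with card $c_i$ in position $i$. Multiplication in $\mathbb{Q}[S_n]$: for $\sigma=c_1\cdots c_n$, $\tau=d_1\cdots d_n$, $\sigma\tau=c_{d_1}\cdots c_{d_n}$, extended bilinearly. For $a\in[n]$, $B_a$ is the sum of all words $c_1\cdots c_n\in S_n$ in which the letters $a+1,\ldots,n$ appear in increasing order from left to right. *)

theory Defs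
  imports Complex_Main
begin

text \<open>Permutations of [n] in deck notation: words c_1...c_n (lists, 0-indexed in Isabelle)
  that are rearrangements of 1,...,n.\<close>
definition words :: "nat \<Rightarrow> nat list set" where
  "words n = {w. length w = n \<and> distinct w \<and> set w = {1..n}}"

definition deck_mult :: "nat list \<Rightarrow> nat list \<Rightarrow> nat list" where
  "deck_mult \<sigma> \<tau> = map (\<lambda>d. \<sigma> ! (d - 1)) \<tau>"

text \<open>Elements of Q[S_n] as coefficient functions on words (zero off words n);
  bilinear extension of deck multiplication.\<close>
definition alg_mult :: "nat \<Rightarrow> (nat list \<Rightarrow> rat) \<Rightarrow> (nat list \<Rightarrow> rat) \<Rightarrow> (nat list \<Rightarrow> rat)" where
  "alg_mult n f g = (\<lambda>w. \<Sum>\<sigma>\<in>words n. \<Sum>\<tau>\<in>words n.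
      if deck_mult \<sigma> \<tau> = w then f \<sigma> * g \<tau> else 0)"

definition B :: "nat \<Rightarrow> nat \<Rightarrow> nat list \<Rightarrow> rat" where
  "B n a = (\<lambda>w. if w \<in> words n \<and>
      (\<forall>i j. i < j \<and> j < length w \<and> a < w ! i \<and> a < w ! j \<longrightarrow> w ! i < w ! j)
     then 1 else 0)"

end

theory Submission
  imports Defs
begin

text \<open>
  The coefficient of a word w in B_{a1} B_{a2} is the number of factorizations
  w = sigma tau with sigma in B_{a1} and tau in B_{a2}.  Since the letters a2+1..n
  of tau are increasing, the suffix of sigma after position a2 is forced: it is w
  with the letters of the prefix c = take a2 sigma deleted.  Hence factorizations
  of w correspond bijectively to injective words c of length a2 for which the
  completion c @ (w without c) lies in B_{a1}.  That condition splits: if r letters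
  of c exceed a1, they must be exactly a1+1, ..., a1+r in increasing order, and w
  itself must lie in B_{a1+r}.  Such prefixes c are shuffles of the interval
  a1+1..a1+r with an injective word of length a2-r over 1..a1, so there are
  (a2 choose r) * a1!/(a1+r-a2)! of them.  Putting j = a1+r gives the theorem.
\<close>

text \<open>Intervals [a..<Suc b] occur as closed objects throughout; keep the simplifier
  from splitting off their last element.\<close>

declare upt_Suc [simp del]


definition incr_above :: "nat \<Rightarrow> nat list \<Rightarrow> bool" where
  "incr_above a w \<longleftrightarrow> sorted_wrt (<) (filter (\<lambda>x. a < x) w)"

lemma incr_above_iff_nth:
  "incr_above a w \<longleftrightarrow>
     (\<forall>i j. i < j \<and> j < length w \<and> a < w ! i \<and> a < w ! j \<longrightarrow> w ! i < w ! j)"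
proof -
  have "sorted_wrt (<) (filter (\<lambda>x. a < x) w) \<longleftrightarrow>
        sorted_wrt (\<lambda>x y. a < x \<and> a < y \<longrightarrow> x < y) w"
    by (induction w) auto
  then show ?thesis
    unfolding incr_above_def sorted_wrt_iff_nth_less[of _ w] by (intro iffI allI impI; metis)
qed

lemma B_eq: "B n a w = (if w \<in> words n \<and> incr_above a w then 1 else 0)"
  unfolding B_def incr_above_iff_nth by simp

lemma strictly_increasing_interval:
  assumes "sorted_wrt (<) xs" and "set xs = {a..<b}"
  shows "xs = [a..<b]"
  using strict_sorted_equal[of "[a..<b]" xs] assms by simp

lemma incr_above_large_letters:
  assumes "\<tau> \<in> words n" and "incr_above a \<tau>"
  shows "filter (\<lambda>d. a < d) \<tau> = [Suc a..<Suc n]"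
proof (rule strictly_increasing_interval)
  show "sorted_wrt (<) (filter (\<lambda>d. a < d) \<tau>)" using assms(2) by (simp add: incr_above_def)
  show "set (filter (\<lambda>d. a < d) \<tau>) = {Suc a..<Suc n}" using assms(1) by (auto simp: words_def)
qed


lemma finite_words: "finite (words n)"
proof (rule finite_subset)
  show "words n \<subseteq> {xs. set xs \<subseteq> {1..n} \<and> length xs = n}" unfolding words_def by auto
qed (simp add: finite_lists_length_eq)

lemma word_bij:
  assumes "\<sigma> \<in> words n"
  shows "bij_betw (\<lambda>d. \<sigma> ! (d - 1)) {1..n} {1..n}"
proof -
  have \<sigma>: "length \<sigma> = n" "distinct \<sigma>" "set \<sigma> = {1..n}" using assms by (auto simp: words_def)
  have inj: "inj_on (\<lambda>d. \<sigma> ! (d - 1)) {1..n}"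
    using \<sigma> by (auto simp: inj_on_def nth_eq_iff_index_eq)
  have "(\<lambda>d. \<sigma> ! (d - 1)) ` {1..n} \<subseteq> {1..n}"
    using \<sigma> nth_mem[of _ \<sigma>] by fastforce
  with inj show ?thesis by (simp add: bij_betw_def endo_inj_surj)
qed

lemma deck_mult_words:
  assumes "\<sigma> \<in> words n" and "\<tau> \<in> words n"
  shows "deck_mult \<sigma> \<tau> \<in> words n"
proof -
  have \<tau>: "set \<tau> = {1..n}" "distinct \<tau>" "length \<tau> = n" using assms(2) by (auto simp: words_def)
  note bij = word_bij[OF assms(1)]
  show ?thesis
    using \<tau> bij_betw_imp_inj_on[OF bij] bij_betw_imp_surj_on[OF bij]
    by (simp add: words_def deck_mult_def distinct_map)
qed

definition pos :: "'a list \<Rightarrow> 'a \<Rightarrow> nat" where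
  "pos xs x = (THE i. i < length xs \<and> xs ! i = x)"

lemma pos_nth: "distinct xs \<Longrightarrow> i < length xs \<Longrightarrow> pos xs (xs ! i) = i"
  unfolding pos_def by (rule the_equality) (auto simp: nth_eq_iff_index_eq)

lemma nth_pos: "distinct xs \<Longrightarrow> x \<in> set xs \<Longrightarrow> pos xs x < length xs \<and> xs ! pos xs x = x"
  by (metis pos_nth in_set_conv_nth)

lemma nth_in_take_iff:
  assumes "distinct xs" and "i < length xs"
  shows "xs ! i \<in> set (take k xs) \<longleftrightarrow> i < k"
proof
  assume "xs ! i \<in> set (take k xs)"
  then obtain j where j: "j < length (take k xs)" "take k xs ! j = xs ! i"
    by (auto simp: in_set_conv_nth)
  then have "j = i" using assms by (simp add: nth_eq_iff_index_eq)
  then show "i < k" using j by simp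
qed (use assms in \<open>auto simp: in_set_conv_nth intro!: exI[of _ i]\<close>)


subsection \<open>The coefficient as a number of factorizations\<close>

definition factorizations :: "nat \<Rightarrow> nat \<Rightarrow> nat \<Rightarrow> nat list \<Rightarrow> (nat list \<times> nat list) set" where
  "factorizations n a1 a2 w = {(\<sigma>, \<tau>). \<sigma> \<in> words n \<and> \<tau> \<in> words n \<and>
     incr_above a1 \<sigma> \<and> incr_above a2 \<tau> \<and> deck_mult \<sigma> \<tau> = w}"

lemma coefficient_eq_card_factorizations:
  "alg_mult n (B n a1) (B n a2) w = of_nat (card (factorizations n a1 a2 w))"
proof -
  let ?W = "words n" and ?F = "factorizations n a1 a2 w"
  have "alg_mult n (B n a1) (B n a2) w = (\<Sum>\<sigma>\<in>?W. \<Sum>\<tau>\<in>?W. if (\<sigma>, \<tau>) \<in> ?F then 1 else 0)"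
    unfolding alg_mult_def by (intro sum.cong refl) (simp add: factorizations_def B_eq)
  also have "\<dots> = (\<Sum>p\<in>?W \<times> ?W. if p \<in> ?F then 1 else 0)"
    by (simp add: sum.cartesian_product case_prod_beta)
  also have "\<dots> = of_nat (card {p \<in> ?W \<times> ?W. p \<in> ?F})"
    by (simp add: sum.inter_filter[symmetric] finite_words)
  also have "{p \<in> ?W \<times> ?W. p \<in> ?F} = ?F" unfolding factorizations_def by auto
  finally show ?thesis .
qed

text \<open>Products of permutations are permutations, so words outside S_n have
  coefficient zero.\<close>

lemma coefficient_outside_words:
  assumes "w \<notin> words n"
  shows "alg_mult n (B n a1) (B n a2) w = 0"
proof -
  have "factorizations n a1 a2 w = {}"
    using assms deck_mult_words unfolding factorizations_def by blast
  then show ?thesis by (simp add: coefficient_eq_card_factorizations)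
qed


subsection \<open>Factorizations correspond to prefixes\<close>

definition completion :: "nat list \<Rightarrow> nat list \<Rightarrow> nat list" where
  "completion c w = c @ filter (\<lambda>x. x \<notin> set c) w"

text \<open>If tau is in B_{a2} and sigma tau = w, then sigma is the completion of its
  first a2 letters: positions a2+1..n of sigma are visited by tau in order.\<close>

lemma factor_is_completion:
  assumes \<sigma>: "\<sigma> \<in> words n" and \<tau>: "\<tau> \<in> words n" "incr_above a2 \<tau>"
    and w: "deck_mult \<sigma> \<tau> = w" and a2: "a2 \<le> n"
  shows "\<sigma> = completion (take a2 \<sigma>) w"
proof -
  let ?f = "\<lambda>d. \<sigma> ! (d - 1)" and ?late = "\<lambda>x. x \<notin> set (take a2 \<sigma>)"
  have \<sigma>': "distinct \<sigma>" "length \<sigma> = n" using \<sigma> by (auto simp: words_def)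
  have "filter ?late w = map ?f (filter (?late \<circ> ?f) \<tau>)"
    unfolding w[symmetric] deck_mult_def filter_map ..
  also have "filter (?late \<circ> ?f) \<tau> = filter (\<lambda>d. a2 < d) \<tau>"
  proof (rule filter_cong[OF refl])
    fix d assume "d \<in> set \<tau>"
    then have "1 \<le> d" "d \<le> n" using \<tau> by (auto simp: words_def)
    then show "(?late \<circ> ?f) d = (a2 < d)"
      using nth_in_take_iff[OF \<sigma>'(1), of "d - 1" a2] \<sigma>' by auto
  qed
  also have "\<dots> = [Suc a2..<Suc n]" using incr_above_large_letters[OF \<tau>] .
  also have "map ?f [Suc a2..<Suc n] = drop a2 \<sigma>"
    using \<sigma>' a2 by (intro nth_equalityI) simp_all
  finally show ?thesis unfolding completion_def by simp
qed

text \<open>Conversely every injective prefix c of length a2 occurs: the completion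
  sigma of c, together with tau = (positions in sigma of the letters of w),
  is a factorization with tau in B_{a2}.\<close>

lemma completion_factorization:
  assumes w: "w \<in> words n" and c: "distinct c" "length c = a2" "set c \<subseteq> {1..n}"
  defines "\<sigma> \<equiv> completion c w"
  defines "\<tau> \<equiv> map (\<lambda>x. Suc (pos \<sigma> x)) w"
  shows "\<sigma> \<in> words n" "\<tau> \<in> words n" "incr_above a2 \<tau>" "deck_mult \<sigma> \<tau> = w"
    and "take a2 \<sigma> = c"
proof -
  have w': "distinct w" "length w = n" "set w = {1..n}" using w by (simp_all add: words_def)
  have \<sigma>d: "distinct \<sigma>" and \<sigma>s: "set \<sigma> = {1..n}"
    unfolding \<sigma>_def completion_def using c w' by auto
  have \<sigma>l: "length \<sigma> = n" using distinct_card[OF \<sigma>d] \<sigma>s by simp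
  show "\<sigma> \<in> words n" using \<sigma>d \<sigma>s \<sigma>l by (simp add: words_def)
  show take: "take a2 \<sigma> = c" unfolding \<sigma>_def completion_def using c by simp
  note pos_w = nth_pos[OF \<sigma>d, unfolded \<sigma>s \<sigma>l, folded w'(3)]
  have "inj_on (\<lambda>x. Suc (pos \<sigma> x)) (set w)"
  proof (rule inj_onI)
    fix x y assume "x \<in> set w" "y \<in> set w" "Suc (pos \<sigma> x) = Suc (pos \<sigma> y)"
    then show "x = y" using pos_w[of x] pos_w[of y] by (metis nat.inject)
  qed
  then have \<tau>d: "distinct \<tau>" unfolding \<tau>_def using w' by (simp add: distinct_map)
  have "set \<tau> \<subseteq> {1..n}" unfolding \<tau>_def using pos_w by (auto simp: Suc_le_eq)
  then have "set \<tau> = {1..n}" using \<tau>d w' distinct_card[OF \<tau>d]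
    by (intro card_subset_eq) (simp_all add: \<tau>_def)
  then show "\<tau> \<in> words n" using \<tau>d w' by (simp add: words_def \<tau>_def)
  show "deck_mult \<sigma> \<tau> = w" unfolding deck_mult_def \<tau>_def map_map
    by (rule map_idI) (simp add: pos_w)
  have "filter (\<lambda>d. a2 < d) \<tau> = map (\<lambda>x. Suc (pos \<sigma> x)) (filter (\<lambda>x. a2 \<le> pos \<sigma> x) w)"
    unfolding \<tau>_def by (simp add: filter_map comp_def less_Suc_eq_le)
  also have "filter (\<lambda>x. a2 \<le> pos \<sigma> x) w = drop a2 \<sigma>"
  proof -
    have "filter (\<lambda>x. a2 \<le> pos \<sigma> x) w = filter (\<lambda>x. x \<notin> set c) w"
    proof (rule filter_cong[OF refl])
      fix x assume x: "x \<in> set w"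
      have "x \<in> set (take a2 \<sigma>) \<longleftrightarrow> pos \<sigma> x < a2"
        using nth_in_take_iff[OF \<sigma>d, of "pos \<sigma> x" a2] pos_w[OF x] \<sigma>l by simp
      then show "(a2 \<le> pos \<sigma> x) = (x \<notin> set c)" using take by auto
    qed
    then show ?thesis unfolding \<sigma>_def completion_def using c by simp
  qed
  also have "map (\<lambda>x. Suc (pos \<sigma> x)) (drop a2 \<sigma>) = [Suc a2..<Suc n]"
  proof -
    have "a2 \<le> n" using \<sigma>l c(2) unfolding \<sigma>_def completion_def by simp
    then show ?thesis using \<sigma>l pos_nth[OF \<sigma>d] by (intro nth_equalityI) auto
  qed
  finally show "incr_above a2 \<tau>" by (simp add: incr_above_def)
qed

definition admissible_prefixes :: "nat \<Rightarrow> nat \<Rightarrow> nat \<Rightarrow> nat list \<Rightarrow> nat list set" where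
  "admissible_prefixes n a1 a2 w = {c. distinct c \<and> length c = a2 \<and> set c \<subseteq> {1..n} \<and>
      incr_above a1 (completion c w)}"

lemma card_factorizations:
  assumes w: "w \<in> words n" and a2: "a2 \<le> n"
  shows "card (factorizations n a1 a2 w) = card (admissible_prefixes n a1 a2 w)"
proof -
  let ?F = "factorizations n a1 a2 w" and ?g = "\<lambda>p. take a2 (fst p)"
  have F: "\<sigma> \<in> words n" "\<tau> \<in> words n" "incr_above a2 \<tau>" "deck_mult \<sigma> \<tau> = w"
    "incr_above a1 \<sigma>" if "(\<sigma>, \<tau>) \<in> ?F" for \<sigma> \<tau>
    using that by (simp_all add: factorizations_def)
  have "inj_on ?g ?F"
  proof (rule inj_onI, clarify)
    fix \<sigma> \<tau> \<sigma>' \<tau>' assume p: "(\<sigma>, \<tau>) \<in> ?F" and q: "(\<sigma>', \<tau>') \<in> ?F"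
      and "?g (\<sigma>, \<tau>) = ?g (\<sigma>', \<tau>')"
    then have "\<sigma> = \<sigma>'"
      using factor_is_completion[OF F(1-4)[OF p] a2] factor_is_completion[OF F(1-4)[OF q] a2]
      by (metis fst_conv)
    moreover have "\<tau> = \<tau>'"
    proof (rule inj_on_map_eq_map[THEN iffD1])
      have "set \<tau> = {1..n}" "set \<tau>' = {1..n}" using F(2)[OF p] F(2)[OF q] by (simp_all add: words_def)
      then show "inj_on (\<lambda>d. \<sigma> ! (d - 1)) (set \<tau> \<union> set \<tau>')"
        using bij_betw_imp_inj_on[OF word_bij[OF F(1)[OF p]]] by simp
      show "map (\<lambda>d. \<sigma> ! (d - 1)) \<tau> = map (\<lambda>d. \<sigma> ! (d - 1)) \<tau>'"
        using F(4)[OF p] F(4)[OF q] \<open>\<sigma> = \<sigma>'\<close> by (simp add: deck_mult_def)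
    qed
    ultimately show "\<sigma> = \<sigma>' \<and> \<tau> = \<tau>'" ..
  qed
  moreover have "?g ` ?F = admissible_prefixes n a1 a2 w"
  proof (intro equalityI subsetI)
    fix c assume "c \<in> ?g ` ?F"
    then obtain \<sigma> \<tau> where p: "(\<sigma>, \<tau>) \<in> ?F" and c: "c = take a2 \<sigma>" by auto
    have \<sigma>: "distinct \<sigma>" "length \<sigma> = n" "set \<sigma> = {1..n}" using F(1)[OF p] by (simp_all add: words_def)
    have "\<sigma> = completion c w" using factor_is_completion[OF F(1-4)[OF p] a2] c by metis
    then have "incr_above a1 (completion c w)" using F(5)[OF p] by simp
    moreover have "distinct c" "length c = a2" "set c \<subseteq> {1..n}"
      using \<sigma> a2 set_take_subset[of a2 \<sigma>] unfolding c by simp_all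
    ultimately show "c \<in> admissible_prefixes n a1 a2 w" by (simp add: admissible_prefixes_def)
  next
    fix c assume "c \<in> admissible_prefixes n a1 a2 w"
    then have c: "distinct c" "length c = a2" "set c \<subseteq> {1..n}"
      and adm: "incr_above a1 (completion c w)" by (simp_all add: admissible_prefixes_def)
    note fac = completion_factorization[OF w c]
    let ?\<tau> = "map (\<lambda>x. Suc (pos (completion c w) x)) w"
    have "(completion c w, ?\<tau>) \<in> ?F" using fac adm by (simp add: factorizations_def)
    moreover have "c = ?g (completion c w, ?\<tau>)" using fac by simp
    ultimately show "c \<in> ?g ` ?F" by blast
  qed
  ultimately show ?thesis by (metis card_image)
qed


subsection \<open>When the completion lies in B_{a1}\<close>

lemma downclosed_interval:
  assumes fin: "finite S" and above: "S \<subseteq> {Suc a..}"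
    and closed: "\<And>x y. x \<in> S \<Longrightarrow> a < y \<Longrightarrow> y \<le> x \<Longrightarrow> y \<in> S"
  shows "S = {Suc a..<Suc a + card S}"
proof (rule card_subset_eq)
  show "S \<subseteq> {Suc a..<Suc a + card S}"
  proof
    fix x assume x: "x \<in> S"
    have "x < Suc a + card S"
    proof (rule ccontr)
      assume "\<not> x < Suc a + card S"
      moreover have "card {Suc a..x} \<le> card S"
        using closed[OF x] fin by (intro card_mono) auto
      ultimately show False by simp
    qed
    then show "x \<in> {Suc a..<Suc a + card S}" using x above by auto
  qed
qed simp_all

lemma remainder_large_letters:
  assumes "set (filter (\<lambda>x. a1 < x) c) = {Suc a1..<Suc (a1 + r)}"
  shows "filter (\<lambda>x. a1 < x) (filter (\<lambda>x. x \<notin> set c) w) = filter (\<lambda>x. a1 + r < x) w"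
  unfolding filter_filter
proof (rule filter_cong[OF refl])
  fix x
  have "x \<in> set c \<and> a1 < x \<longleftrightarrow> Suc a1 \<le> x \<and> x < Suc (a1 + r)"
    using assms[unfolded set_eq_iff, rule_format, of x] by simp
  then show "(x \<notin> set c \<and> a1 < x) = (a1 + r < x)" by auto
qed

lemma incr_above_completion:
  fixes a1 :: nat
  assumes w: "w \<in> words n" and c: "distinct c" "set c \<subseteq> {1..n}"
  defines "r \<equiv> length (filter (\<lambda>x. a1 < x) c)"
  shows "incr_above a1 (completion c w) \<longleftrightarrow>
    filter (\<lambda>x. a1 < x) c = [Suc a1..<Suc (a1 + r)] \<and> incr_above (a1 + r) w"
proof -
  let ?A = "filter (\<lambda>x. a1 < x) c"
  let ?R = "filter (\<lambda>x. a1 < x) (filter (\<lambda>x. x \<notin> set c) w)"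
  have split: "incr_above a1 (completion c w) \<longleftrightarrow>
      sorted_wrt (<) ?A \<and> sorted_wrt (<) ?R \<and> (\<forall>x\<in>set ?A. \<forall>y\<in>set ?R. x < y)"
    unfolding incr_above_def completion_def filter_append sorted_wrt_append by simp
  show ?thesis
  proof
    assume "incr_above a1 (completion c w)"
    then have sA: "sorted_wrt (<) ?A" and sR: "sorted_wrt (<) ?R"
      and below: "\<forall>x\<in>set ?A. \<forall>y\<in>set ?R. x < y" using split by blast+
    have "set ?A = {Suc a1..<Suc a1 + card (set ?A)}"
    proof (rule downclosed_interval)
      fix x y assume x: "x \<in> set ?A" and y: "a1 < y" "y \<le> x"
      show "y \<in> set ?A"
      proof (rule ccontr)
        assume "y \<notin> set ?A"
        moreover have "y \<in> set w" using w x c y by (auto simp: words_def)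
        ultimately have "y \<in> set ?R" using y by simp
        then have "x < y" using below x by blast
        then show False using y(2) by simp
      qed
    qed auto
    moreover have "card (set ?A) = r"
      unfolding r_def using c(1) by (intro distinct_card) simp
    ultimately have A: "set ?A = {Suc a1..<Suc (a1 + r)}" by simp
    then have "?A = [Suc a1..<Suc (a1 + r)]" by (rule strictly_increasing_interval[OF sA])
    moreover have "incr_above (a1 + r) w"
      using sR unfolding remainder_large_letters[OF A] incr_above_def .
    ultimately show "?A = [Suc a1..<Suc (a1 + r)] \<and> incr_above (a1 + r) w" ..
  next
    assume R: "?A = [Suc a1..<Suc (a1 + r)] \<and> incr_above (a1 + r) w"
    then have A: "set ?A = {Suc a1..<Suc (a1 + r)}" by simp
    show "incr_above a1 (completion c w)"
      using R unfolding split remainder_large_letters[OF A] by (simp add: incr_above_def)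
  qed
qed


subsection \<open>Counting prefixes by rank\<close>

definition ranked_prefixes :: "nat \<Rightarrow> nat \<Rightarrow> nat \<Rightarrow> nat \<Rightarrow> nat list set" where
  "ranked_prefixes n a1 a2 r = {c. distinct c \<and> length c = a2 \<and> set c \<subseteq> {1..n} \<and>
     filter (\<lambda>x. a1 < x) c = [Suc a1..<Suc (a1 + r)]}"

lemma finite_ranked_prefixes: "finite (ranked_prefixes n a1 a2 r)"
proof (rule finite_subset)
  show "ranked_prefixes n a1 a2 r \<subseteq> {xs. set xs \<subseteq> {1..n} \<and> length xs = a2}"
    unfolding ranked_prefixes_def by auto
qed (simp add: finite_lists_length_eq)

lemma card_admissible_prefixes:
  assumes w: "w \<in> words n"
  shows "card (admissible_prefixes n a1 a2 w) =
    (\<Sum>r = 0..a2. if incr_above (a1 + r) w then card (ranked_prefixes n a1 a2 r) else 0)"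
proof -
  let ?D = "\<lambda>r. {c \<in> ranked_prefixes n a1 a2 r. incr_above (a1 + r) w}"
  have "admissible_prefixes n a1 a2 w = (\<Union>r\<in>{0..a2}. ?D r)"
  proof (intro equalityI subsetI)
    fix c assume "c \<in> admissible_prefixes n a1 a2 w"
    then have c: "distinct c" "length c = a2" "set c \<subseteq> {1..n}"
      and adm: "incr_above a1 (completion c w)" by (simp_all add: admissible_prefixes_def)
    define r where "r = length (filter (\<lambda>x. a1 < x) c)"
    have "r \<le> a2" unfolding r_def using c(2) length_filter_le[of _ c] by simp
    moreover have "c \<in> ?D r"
      using adm c incr_above_completion[OF w c(1,3), of a1]
      by (simp add: ranked_prefixes_def r_def)
    ultimately show "c \<in> (\<Union>r\<in>{0..a2}. ?D r)" by auto
  next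
    fix c assume "c \<in> (\<Union>r\<in>{0..a2}. ?D r)"
    then obtain r where c: "distinct c" "length c = a2" "set c \<subseteq> {1..n}"
      and A: "filter (\<lambda>x. a1 < x) c = [Suc a1..<Suc (a1 + r)]" and "incr_above (a1 + r) w"
      by (auto simp: ranked_prefixes_def)
    then show "c \<in> admissible_prefixes n a1 a2 w"
      using incr_above_completion[OF w c(1,3), of a1] by (simp add: admissible_prefixes_def)
  qed
  moreover have "card (\<Union>r\<in>{0..a2}. ?D r) = (\<Sum>r = 0..a2. card (?D r))"
  proof (rule card_UN_disjoint)
    show "\<forall>r\<in>{0..a2}. \<forall>r'\<in>{0..a2}. r \<noteq> r' \<longrightarrow> ?D r \<inter> ?D r' = {}"
      by (auto simp: ranked_prefixes_def dest: arg_cong[of _ _ length])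
  qed (simp_all add: finite_ranked_prefixes)
  moreover have "card (?D r) = (if incr_above (a1 + r) w then card (ranked_prefixes n a1 a2 r) else 0)"
    for r by simp
  ultimately show ?thesis by simp
qed

definition arrangements :: "nat \<Rightarrow> nat \<Rightarrow> nat list set" where
  "arrangements a k = {s. length s = k \<and> distinct s \<and> set s \<subseteq> {1..a}}"

lemma card_arrangements:
  assumes "k \<le> a"
  shows "(of_nat (card (arrangements a k)) :: 'f :: field_char_0) = fact a / fact (a - k)"
proof -
  have "card (arrangements a k) = \<Prod>{Suc (a - k)..a}"
    unfolding arrangements_def using assms
    by (subst card_lists_distinct_length_eq) (simp_all add: Suc_diff_le)
  moreover have "(fact a :: 'f) = fact (a - k) * of_nat (\<Prod>{Suc (a - k)..a})"
    using fact_eq_fact_times[of "a - k" a] by (metis diff_le_self of_nat_fact of_nat_mult)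
  ultimately show ?thesis by (simp add: field_simps)
qed

text \<open>A prefix of rank r is a shuffle of the interval a1+1..a1+r with an
  arrangement of a2-r small letters; both are recovered by filtering.\<close>

lemma ranked_prefixes_eq_shuffles:
  assumes "r \<le> a2" and "a1 + r \<le> n"
  shows "ranked_prefixes n a1 a2 r =
    (\<Union>s\<in>arrangements a1 (a2 - r). shuffles s [Suc a1..<Suc (a1 + r)])"
proof (intro equalityI subsetI)
  let ?L = "[Suc a1..<Suc (a1 + r)]"
  fix c assume "c \<in> ranked_prefixes n a1 a2 r"
  then have c: "distinct c" "length c = a2" "set c \<subseteq> {1..n}"
    and A: "filter (\<lambda>x. a1 < x) c = ?L" by (simp_all add: ranked_prefixes_def)
  let ?s = "filter (\<lambda>x. \<not> a1 < x) c"
  have "c \<in> shuffles ?s ?L"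
    using partition_in_shuffles[of c "\<lambda>x. a1 < x"] A by (simp add: shuffles_commutes)
  moreover have "?s \<in> arrangements a1 (a2 - r)"
    using c sum_length_filter_compl[of "\<lambda>x. a1 < x" c] A
    by (auto simp: arrangements_def)
  ultimately show "c \<in> (\<Union>s\<in>arrangements a1 (a2 - r). shuffles s ?L)" by blast
next
  let ?L = "[Suc a1..<Suc (a1 + r)]"
  fix c assume "c \<in> (\<Union>s\<in>arrangements a1 (a2 - r). shuffles s ?L)"
  then obtain s where s: "length s = a2 - r" "distinct s" "set s \<subseteq> {1..a1}"
    and cs: "c \<in> shuffles s ?L" by (auto simp: arrangements_def)
  have disj: "set s \<inter> set ?L = {}" using s(3) by auto
  have "filter (\<lambda>x. a1 < x) c = filter (\<lambda>x. x \<notin> set s) c"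
    using set_shuffles[OF cs] s(3) by (intro filter_cong) auto
  then have "filter (\<lambda>x. a1 < x) c = ?L" using filter_shuffles_disjoint1(2)[OF disj cs] by simp
  moreover have "distinct c" using distinct_disjoint_shuffles[OF s(2) _ disj cs] by simp
  moreover have "length c = a2" using length_shuffles[OF cs] s(1) assms(1) by simp
  moreover have "set c \<subseteq> {1..n}" using set_shuffles[OF cs] s(3) assms(2) by auto
  ultimately show "c \<in> ranked_prefixes n a1 a2 r" by (simp add: ranked_prefixes_def)
qed

text \<open>Prefixes of rank r exist only when the small letters fit into 1..a1 and the
  large ones into 1..n, i.e. for a2 <= a1+r <= n (and r <= a2).\<close>

lemma ranked_prefixes_empty:
  assumes "a1 \<le> n" and "a1 + r < a2 \<or> n < a1 + r \<or> a2 < r"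
  shows "ranked_prefixes n a1 a2 r = {}"
proof (rule equals0I)
  fix c assume "c \<in> ranked_prefixes n a1 a2 r"
  then have c: "distinct c" "length c = a2" "set c \<subseteq> {1..n}"
    and A: "filter (\<lambda>x. a1 < x) c = [Suc a1..<Suc (a1 + r)]" by (simp_all add: ranked_prefixes_def)
  let ?s = "filter (\<lambda>x. \<not> a1 < x) c"
  have "r \<le> a2" using length_filter_le[of "\<lambda>x. a1 < x" c] A c(2) by simp
  moreover have "length ?s = a2 - r"
    using sum_length_filter_compl[of "\<lambda>x. a1 < x" c] A c(2) by simp
  moreover have "length ?s \<le> a1"
  proof -
    have "length ?s = card (set ?s)" using c(1) distinct_card[of ?s] by simp
    also have "\<dots> \<le> card {1..a1}" using c(3) by (intro card_mono) auto
    finally show ?thesis by simp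
  qed
  moreover have "a1 + r \<le> n"
  proof (cases r)
    case (Suc k)
    then have "a1 + r \<in> set [Suc a1..<Suc (a1 + r)]" by simp
    then have "a1 + r \<in> set c" unfolding A[symmetric] by simp
    then show ?thesis using c(3) by auto
  qed (use assms(1) in simp)
  ultimately show False using assms(2) by linarith
qed

text \<open>The number of prefixes of rank r = j - a1: choose an arrangement of the a2-r
  small letters and the positions of the r large ones among the a2 places.\<close>

lemma card_ranked_prefixes:
  assumes j: "max a1 a2 \<le> j" "j \<le> min (a1 + a2) n"
  shows "(of_nat (card (ranked_prefixes n a1 a2 (j - a1))) :: 'f :: field_char_0) =
    fact a2 / (fact (j - a1) * fact (a1 + a2 - j)) * (fact a1 / fact (j - a2))"
proof -
  define r where "r = j - a1"
  have r: "r \<le> a2" "a1 + r \<le> n" "a2 - r \<le> a1"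
    and shift: "a1 + a2 - j = a2 - r" "j - a2 = a1 - (a2 - r)" using j by (auto simp: r_def)
  let ?L = "[Suc a1..<Suc (a1 + r)]" and ?S = "arrangements a1 (a2 - r)"
  have disj: "set s \<inter> set ?L = {}" if "s \<in> ?S" for s
    using that by (auto simp: arrangements_def)
  have "card (ranked_prefixes n a1 a2 r) = (\<Sum>s\<in>?S. card (shuffles s ?L))"
    unfolding ranked_prefixes_eq_shuffles[OF r(1,2)]
  proof (rule card_UN_disjoint)
    show "finite ?S"
      by (rule finite_subset[of _ "{s. set s \<subseteq> {1..a1} \<and> length s = a2 - r}"])
        (auto simp: arrangements_def finite_lists_length_eq)
    show "\<forall>s\<in>?S. \<forall>s'\<in>?S. s \<noteq> s' \<longrightarrow> shuffles s ?L \<inter> shuffles s' ?L = {}"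
      using filter_shuffles_disjoint2(2)[OF disj] by blast
  qed simp
  also have "\<dots> = (\<Sum>s\<in>?S. a2 choose r)"
  proof (rule sum.cong[OF refl])
    fix s assume s: "s \<in> ?S"
    then have "length s = a2 - r" by (simp add: arrangements_def)
    then show "card (shuffles s ?L) = a2 choose r"
      using card_disjoint_shuffles[OF disj[OF s]] r(1) binomial_symmetric[OF r(1)] by simp
  qed
  finally have "card (ranked_prefixes n a1 a2 r) = card ?S * (a2 choose r)" by simp
  then show ?thesis
    unfolding r_def[symmetric] shift
    using card_arrangements[OF r(3), where 'f = 'f] binomial_fact[OF r(1), where 'a = 'f]
    by (simp add: ac_simps)
qed


lemma coefficient_by_rank:
  assumes "w \<in> words n" and "a2 \<le> n"
  shows "alg_mult n (B n a1) (B n a2) w =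
    (\<Sum>r = 0..a2. if incr_above (a1 + r) w then of_nat (card (ranked_prefixes n a1 a2 r)) else 0)"
proof -
  have count: "card (factorizations n a1 a2 w) =
    (\<Sum>r = 0..a2. if incr_above (a1 + r) w then card (ranked_prefixes n a1 a2 r) else 0)"
    using card_factorizations[OF assms] card_admissible_prefixes[OF assms(1)] by simp
  show ?thesis
    unfolding coefficient_eq_card_factorizations count of_nat_sum by (intro sum.cong) simp_all
qed

text \<open>The theorem: reindex the rank sum by j = a1 + r; ranks outside
  max a1 a2 <= j <= min (a1 + a2) n contribute nothing, and inside that window the
  count of prefixes is the stated coefficient.\<close>

theorem mainTheorem7:
  fixes n a1 a2 :: nat
  assumes "a1 \<in> {1..n}" and "a2 \<in> {1..n}"
  shows "alg_mult n (B n a1) (B n a2) =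
    (\<lambda>w. \<Sum>j = max a1 a2..min (a1 + a2) n.
        ((fact a2 :: rat) / (fact (j - a1) * fact (a1 + a2 - j))) *
        ((fact a1 :: rat) / fact (j - a2)) * B n j w)"
proof
  fix w
  have a1: "a1 \<le> n" and a2: "a2 \<le> n" using assms by auto
  let ?coef = "\<lambda>j. ((fact a2 :: rat) / (fact (j - a1) * fact (a1 + a2 - j))) *
        ((fact a1 :: rat) / fact (j - a2))"
  define count :: "nat \<Rightarrow> rat" where
    "count j = (if incr_above j w then of_nat (card (ranked_prefixes n a1 a2 (j - a1))) else 0)" for j
  show "alg_mult n (B n a1) (B n a2) w = (\<Sum>j = max a1 a2..min (a1 + a2) n. ?coef j * B n j w)"
  proof (cases "w \<in> words n")
    case False
    then show ?thesis by (simp add: coefficient_outside_words B_eq)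
  next
    case True
    have "alg_mult n (B n a1) (B n a2) w = (\<Sum>r = 0..a2. count (a1 + r))"
      unfolding coefficient_by_rank[OF True a2] count_def by (intro sum.cong) simp_all
    also have "\<dots> = (\<Sum>r = 0..a2. count (r + a1))" by (simp add: add.commute)
    also have "\<dots> = (\<Sum>j = a1..a2 + a1. count j)"
      using sum.shift_bounds_cl_nat_ivl[of count 0 a1 a2] by simp
    also have "\<dots> = (\<Sum>j = max a1 a2..min (a1 + a2) n. count j)"
      by (rule sum.mono_neutral_right) (auto simp: count_def ranked_prefixes_empty[OF a1])
    also have "\<dots> = (\<Sum>j = max a1 a2..min (a1 + a2) n. ?coef j * B n j w)"
      by (intro sum.cong refl) (simp add: count_def B_eq True card_ranked_prefixes)
    finally show ?thesis .
  qed
qed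

end
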